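(* Consider Algorithm ProxSVRG (described in the context) with minibatch size $b\le n$, epoch length $m\ge 1$, a number of inner iterations $T$ that is a multiple of $m$, and step size $\eta=\rho/L$, where $0<\rho<1/2$ satisfies $$\frac{4\rho^2 m^2}{b}+\rho\le 1 .$$ Then the output $x_a$ of the algorithm satisfies $$\mathbb E\big[\|\mathcal G_\eta(x_a)\|^2\big]\le \frac{2L\,(F(x^0)-F(x^* ))}{\rho(1-2\rho)\,T},$$ where $x^*$ is an optimal solution of $\min_x F(x)$.
   Context: Setting: Let $n,d\ge 1$ be integers and $[n]=\{1,\dots,n\}$. Let $f_1,\dots,f_n:\mathbb R^d\to\mathbb R$ be differentiable (possibly nonconvex) functions, each $L$-smooth for some $L>0$, i.e. $\|\nabla f_i(x)-\nabla f_i(y)\|\le L\|x-y\|$ for all $x,y\in\mathbb R^d$ and $i\in[n]$. Let $f=\frac1n\sum_{i=1}^n f_i$. Let $h:\mathbb R^d\to\mathbb R\cup\{+\infty\}$ be proper, lower semicontinuous and convex, with closed domain. Let $F=f+h$, and let $x^*$ be a global minimizer of $F$ on $\mathbb R^d$ (assumed to exist). For $\eta>0$, $\mathrm{prox}_{\eta h}(x):=\arg\min_{y\in\mathbb R^d}\big(h(y)+\frac1{2\eta}\|y-x\|^2\big)$, and the gradient mapping is $\mathcal G_\eta(x):=\frac1\eta\big[x-\mathrm{prox}_{\eta h}(x-\eta\nabla f(x))\big]$. Algorithm ProxSVRG$(x^0,T,m,b,\eta)$: Given $x^0\in\mathbb R^d$, positive integers $T,m,b$ and $\eta>0$, let $S=\lceil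 T/m\rceil$ and set $\tilde x^0=x^0_m=x^0$. For $s=0,\dots,S-1$: set $x^{s+1}_0=x^s_m$ and $g^{s+1}=\frac1n\sum_{i=1}^n\nabla f_i(\tilde x^s)$; for $t=0,\dots,m-1$: draw a multiset $I_t$ of $b$ indices, each drawn independently and uniformly at random from $[n]$ (with replacement, independently of all previous draws), set $v^{s+1}_t=\frac1b\sum_{i\in I_t}\big(\nabla f_i(x^{s+1}_t)-\nabla f_i(\tilde x^s)\big)+g^{s+1}$ and $x^{s+1}_{t+1}=\mathrm{prox}_{\eta h}(x^{s+1}_t-\eta v^{s+1}_t)$; after the inner loop set $\tilde x^{s+1}=x^{s+1}_m$. The output $x_a$ is chosen uniformly at random from $\{x^{s+1}_t: 0\le t\le m-1,\ 0\le s\le S-1\}$. Expectations are over all randomness of the algorithm. *)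

theory Defs
  imports "HOL-Analysis.Analysis" "HOL-Probability.Probability"
begin

definition proper_ext :: "('a \<Rightarrow> ereal) \<Rightarrow> bool" where
  "proper_ext h \<longleftrightarrow> (\<forall>x. h x \<noteq> -\<infinity>) \<and> (\<exists>x. h x \<noteq> \<infinity>)"

definition lsc_ext :: "('a::topological_space \<Rightarrow> ereal) \<Rightarrow> bool" where
  "lsc_ext h \<longleftrightarrow> (\<forall>c. closed {x. h x \<le> c})"

definition convex_ext :: "('a::real_vector \<Rightarrow> ereal) \<Rightarrow> bool" where
  "convex_ext h \<longleftrightarrow> (\<forall>x y (u::real). 0 \<le> u \<and> u \<le> 1 \<longrightarrow>
      h ((1 - u) *\<^sub>R x + u *\<^sub>R y) \<le> ereal (1 - u) * h x + ereal u * h y)"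

definition dom_ext :: "('a \<Rightarrow> ereal) \<Rightarrow> 'a set" where
  "dom_ext h = {x. h x \<noteq> \<infinity>}"

definition prox :: "real \<Rightarrow> ('a::real_normed_vector \<Rightarrow> ereal) \<Rightarrow> 'a \<Rightarrow> 'a" where
  "prox \<eta> h x = (SOME y. \<forall>z. h y + ereal (norm (y - x) ^ 2 / (2 * \<eta>))
                              \<le> h z + ereal (norm (z - x) ^ 2 / (2 * \<eta>)))"

definition full_grad :: "nat \<Rightarrow> (nat \<Rightarrow> 'a \<Rightarrow> 'a::real_vector) \<Rightarrow> 'a \<Rightarrow> 'a" where
  "full_grad n grad x = (1 / real n) *\<^sub>R (\<Sum>i<n. grad i x)"

definition grad_map :: "nat \<Rightarrow> (nat \<Rightarrow> 'a \<Rightarrow> 'a::real_normed_vector) \<Rightarrow> ('a \<Rightarrow> ereal)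
                         \<Rightarrow> real \<Rightarrow> 'a \<Rightarrow> 'a" where
  "grad_map n grad h \<eta> x = (1 / \<eta>) *\<^sub>R (x - prox \<eta> h (x - \<eta> *\<^sub>R full_grad n grad x))"

text \<open>One inner step of ProxSVRG at global inner-iteration index k = s*m + t.
  The state is (current iterate, snapshot).  At the start of each epoch
  (k mod m = 0) the snapshot is set to the current iterate (x^{s+1}_0 = x^s_m = \<tilde>x^s).
  I is the list (multiset) of b sampled indices.\<close>
definition svrg_step :: "nat \<Rightarrow> (nat \<Rightarrow> 'a \<Rightarrow> 'a::real_normed_vector) \<Rightarrow> ('a \<Rightarrow> ereal)
      \<Rightarrow> real \<Rightarrow> nat \<Rightarrow> nat \<Rightarrow> nat \<Rightarrow> nat list \<Rightarrow> 'a \<times> 'a \<Rightarrow> 'a \<times> 'a" where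
  "svrg_step n grad h \<eta> m b k I st =
     (let x = fst st;
          xt = (if k mod m = 0 then fst st else snd st);
          v = (1 / real b) *\<^sub>R (\<Sum>i\<leftarrow>I. grad i x - grad i xt) + full_grad n grad xt
      in (prox \<eta> h (x - \<eta> *\<^sub>R v), xt))"

primrec svrg_state :: "nat \<Rightarrow> (nat \<Rightarrow> 'a \<Rightarrow> 'a::real_normed_vector) \<Rightarrow> ('a \<Rightarrow> ereal)
      \<Rightarrow> real \<Rightarrow> nat \<Rightarrow> nat \<Rightarrow> 'a \<Rightarrow> nat list list \<Rightarrow> nat \<Rightarrow> 'a \<times> 'a" where
  "svrg_state n grad h \<eta> m b x0 Is 0 = (x0, x0)"
| "svrg_state n grad h \<eta> m b x0 Is (Suc k) =
     svrg_step n grad h \<eta> m b k (Is ! k) (svrg_state n grad h \<eta> m b x0 Is k)"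

text \<open>Distribution of the output x_a of ProxSVRG(x0, T, m, b, \<eta>) for T a multiple of m:
  T minibatches, each consisting of b independent uniform indices from {0..<n}
  (i.e. [n] shifted to 0-based), followed by a uniform choice of one of the
  iterates x_k, k < T (k = s*m + t, 0 \<le> t < m, 0 \<le> s < T/m).\<close>
definition proxsvrg_output :: "nat \<Rightarrow> (nat \<Rightarrow> 'a \<Rightarrow> 'a::real_normed_vector) \<Rightarrow> ('a \<Rightarrow> ereal)
      \<Rightarrow> 'a \<Rightarrow> nat \<Rightarrow> nat \<Rightarrow> nat \<Rightarrow> real \<Rightarrow> 'a pmf" where
  "proxsvrg_output n grad h x0 T m b \<eta> =
     do { Is \<leftarrow> replicate_pmf T (replicate_pmf b (pmf_of_set {..<n}));
          k \<leftarrow> pmf_of_set {..<T};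
          return_pmf (fst (svrg_state n grad h \<eta> m b x0 Is k)) }"

end

theory Submission
  imports Defs
begin

text \<open>Lyapunov argument. For inner step \<open>k = s m + t\<close> with snapshot \<open>x\<^sub>s\<close>, let
  \<open>\<Phi>\<^sub>k = F x\<^sub>k + c\<^sub>t \<parallel>x\<^sub>k - x\<^sub>s\<parallel>\<^sup>2\<close> with \<open>c\<^sub>t = \<eta> L\<^sup>2 (m - t) / b\<close>. A proximal step along the
  variance-reduced gradient \<open>v\<close> decreases \<open>F\<close> up to \<open>\<eta>/2 \<parallel>\<nabla>f x\<^sub>k - v\<parallel>\<^sup>2\<close>, whose expectation over the
  minibatch is at most \<open>L\<^sup>2/b \<parallel>x\<^sub>k - x\<^sub>s\<parallel>\<^sup>2\<close>; the step-size condition lets the drop \<open>c\<^sub>t - c\<^sub>t\<^sub>+\<^sub>1\<close>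
  pay for this error and for the growth of the distance to the snapshot, so that
  \<open>E \<Phi>\<^sub>k\<^sub>+\<^sub>1 \<le> E \<Phi>\<^sub>k - (\<eta>/2 - L \<eta>\<^sup>2) E \<parallel>G\<^sub>\<eta> x\<^sub>k\<parallel>\<^sup>2\<close>. Telescoping, with \<open>\<Phi>\<^sub>T \<ge> F x\<^sup>*\<close>, bounds the
  average of \<open>E \<parallel>G\<^sub>\<eta> x\<^sub>k\<parallel>\<^sup>2\<close> over \<open>k < T\<close>, which is the expectation at the output.
  The proximal map is well defined because the proximal objective is coercive and lower semicontinuous.\<close>

section \<open>Lower semicontinuous functions\<close>

lemma lsc_attains_min_on_compact:
  fixes g :: "'a::topological_space \<Rightarrow> ereal"
  assumes "compact K" and "K \<noteq> {}" and lsc: "\<And>c. closed {x. g x \<le> c}"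
  shows "\<exists>z\<in>K. \<forall>y\<in>K. g z \<le> g y"
proof -
  have "K \<inter> (\<Inter>y\<in>K. {x. g x \<le> g y}) \<noteq> {}"
  proof (rule compact_imp_fip_image[OF \<open>compact K\<close>])
    show "closed {x. g x \<le> g y}" for y
      using lsc by blast
    fix I assume I: "finite I" "I \<subseteq> K"
    show "K \<inter> (\<Inter>y\<in>I. {x. g x \<le> g y}) \<noteq> {}"
    proof (cases "I = {}")
      case False
      obtain z where "z \<in> I" "\<forall>y\<in>I. g z \<le> g y"
        using arg_min_if_finite[OF I(1) False, of g] by (metis arg_min_least I(1) False)
      then show ?thesis using I by auto
    qed (use \<open>K \<noteq> {}\<close> in auto)
  qed
  then show ?thesis by auto
qed

lemma closed_sublevel_add_continuous:
  fixes h :: "'a::topological_space \<Rightarrow> ereal" and q :: "'a \<Rightarrow> real"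
  assumes lsc: "\<And>c. closed {x. h x \<le> c}" and q: "continuous_on UNIV q"
  shows "closed {x. h x + ereal (q x) \<le> c}"
proof -
  have "{x. h x + ereal (q x) \<le> c} = (\<Inter>t. {x. q x \<le> t} \<union> {x. h x \<le> c - ereal t})"
  proof (intro equalityI subsetI)
    fix x assume "x \<in> {x. h x + ereal (q x) \<le> c}"
    then have "q x \<le> t \<or> h x \<le> c - ereal t" for t
      by (cases c; cases "h x") auto
    then show "x \<in> (\<Inter>t. {x. q x \<le> t} \<union> {x. h x \<le> c - ereal t})" by blast
  next
    fix x assume "x \<in> (\<Inter>t. {x. q x \<le> t} \<union> {x. h x \<le> c - ereal t})"
    then have split: "\<And>t. q x \<le> t \<or> h x \<le> c - ereal t" by auto
    show "x \<in> {x. h x + ereal (q x) \<le> c}"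
    proof (simp, rule ereal_le_epsilon2)
      fix e :: real assume "0 < e"
      with split[of "q x - e"] have "h x \<le> c - ereal (q x - e)" by auto
      then show "h x + ereal (q x) \<le> c + ereal e" by (cases c; cases "h x") auto
    qed
  qed
  then show ?thesis
    by (simp only:) (intro closed_INT ballI closed_Un lsc closed_Collect_le q continuous_on_const)
qed

section \<open>Proximal operator of a proper, convex, lower semicontinuous function\<close>

text \<open>The segment from \<open>x1\<close> to \<open>y\<close> crosses the unit sphere around \<open>x1\<close>; convexity at the crossing
  point transfers the lower bound \<open>M\<close> along the whole ray.\<close>

lemma convex_ext_norm_minorant:
  fixes h :: "'a::real_normed_vector \<Rightarrow> ereal"
  assumes convex: "convex_ext h" and not_minf: "\<And>x. h x \<noteq> -\<infinity>"
    and hx1: "h x1 = ereal a" and ball_min: "\<And>z. z \<in> cball x1 1 \<Longrightarrow> ereal M \<le> h z"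
  shows "ereal (M - (a - M) * norm (y - x1)) \<le> h y"
proof -
  have "M \<le> a" using ball_min[of x1] hx1 by simp
  define r where "r = norm (y - x1)"
  consider "r \<le> 1" | "r > 1" "h y = \<infinity>" | c where "r > 1" "h y = ereal c"
    using not_minf[of y] by (cases "h y") force+
  then show ?thesis
  proof cases
    case 1
    then have "ereal M \<le> h y" using ball_min by (simp add: r_def dist_norm norm_minus_commute)
    moreover have "M - (a - M) * r \<le> M" using \<open>M \<le> a\<close> by (simp add: r_def)
    ultimately show ?thesis by (metis ereal_less_eq(3) order_trans r_def)
  next
    case (3 c)
    define u where "u = 1 / r"
    have u: "0 < u" "u \<le> 1" using 3 by (auto simp: u_def)
    define z where "z = (1 - u) *\<^sub>R x1 + u *\<^sub>R y"
    have "norm (z - x1) = 1"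
      using 3 by (auto simp: z_def u_def r_def algebra_simps simp flip: scaleR_diff_right)
    then have "ereal M \<le> h z" using ball_min by (simp add: dist_norm norm_minus_commute)
    also have "h z \<le> ereal (1 - u) * h x1 + ereal u * h y"
      using convex u unfolding convex_ext_def z_def by simp
    finally have "M \<le> (1 - u) * a + u * c" using hx1 3 by simp
    then have "r * M \<le> (r - 1) * a + c"
      using 3 mult_left_mono[of M "(1 - u) * a + u * c" r] by (simp add: u_def field_simps)
    then have "M - (a - M) * r \<le> c" using \<open>M \<le> a\<close> by (simp add: algebra_simps)
    then show ?thesis using 3 by (simp add: r_def)
  qed simp
qed

lemma quadratic_le_imp_le:
  fixes t \<alpha> \<beta> :: real
  assumes "0 \<le> \<beta>" and "t ^ 2 \<le> \<alpha> + \<beta> * t"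
  shows "t \<le> 1 + \<bar>\<alpha>\<bar> + \<beta>"
proof (cases "t \<le> 1")
  case False
  then have "t * t \<le> (\<bar>\<alpha>\<bar> + \<beta>) * t"
    using assms(2) abs_ge_self[of \<alpha>] mult_right_mono[of 1 t "\<bar>\<alpha>\<bar>"]
    by (simp add: power2_eq_square algebra_simps)
  then show ?thesis using False by simp
qed (use assms(1) in simp)

lemma proper_convex_lsc_norm_minorant:
  fixes h :: "'a::euclidean_space \<Rightarrow> ereal"
  assumes "proper_ext h" and "lsc_ext h" and "convex_ext h"
  obtains x1 a B M where "h x1 = ereal a" and "B \<ge> 0" and "\<And>y. ereal (M - B * norm (y - x1)) \<le> h y"
proof -
  have lsc: "\<And>c. closed {x. h x \<le> c}" and not_minf: "\<And>x. h x \<noteq> -\<infinity>"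
    using assms(1,2) unfolding lsc_ext_def proper_ext_def by blast+
  obtain x1 a where hx1: "h x1 = ereal a"
    using assms(1) not_minf unfolding proper_ext_def by (metis ereal_cases)
  obtain z0 where z0: "z0 \<in> cball x1 1" "\<forall>y\<in>cball x1 1. h z0 \<le> h y"
    using lsc_attains_min_on_compact[of "cball x1 1" h] lsc by auto
  then obtain M where M: "h z0 = ereal M"
    using hx1 not_minf[of z0] by (cases "h z0") force+
  have "M \<le> a" using z0(2)[rule_format, of x1] M hx1 by simp
  have "ereal (M - (a - M) * norm (y - x1)) \<le> h y" for y
    by (rule convex_ext_norm_minorant[OF assms(3) not_minf hx1]) (use z0 M in metis)
  with hx1 \<open>M \<le> a\<close> show ?thesis by (intro that[of x1 a "a - M" M]) auto
qed

text \<open>Coercivity: \<open>h\<close> decreases at most linearly in \<open>norm (y - x1)\<close> while the proximal penalty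
  grows quadratically.\<close>

lemma bounded_sublevel_prox_objective:
  fixes h :: "'a::real_normed_vector \<Rightarrow> ereal"
  assumes minorant: "\<And>y. ereal (M - B * norm (y - x1)) \<le> h y" and "B \<ge> 0" and "\<eta> > 0"
  shows "bounded {y. h y + ereal (norm (y - u) ^ 2 / (2 * \<eta>)) \<le> ereal c}"
proof -
  define R where "R = 1 + \<bar>2 * \<eta> * (c - M + B * norm (x1 - u))\<bar> + 2 * \<eta> * B"
  have "norm (y - u) \<le> R" if y: "h y + ereal (norm (y - u) ^ 2 / (2 * \<eta>)) \<le> ereal c" for y
    unfolding R_def
  proof (rule quadratic_le_imp_le)
    have "ereal (M - B * norm (y - x1)) + ereal (norm (y - u) ^ 2 / (2 * \<eta>)) \<le> ereal c"
      using add_right_mono[OF minorant] y by (rule order_trans)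
    then have "norm (y - u) ^ 2 \<le> 2 * \<eta> * (c - M + B * norm (y - x1))"
      using \<open>\<eta> > 0\<close> by (simp add: field_simps)
    also have "\<dots> \<le> 2 * \<eta> * (c - M + B * (norm (x1 - u) + norm (y - u)))"
      using \<open>\<eta> > 0\<close> \<open>B \<ge> 0\<close> norm_triangle_ineq4[of "y - u" "x1 - u"]
      by (intro mult_left_mono add_left_mono) auto
    finally show "norm (y - u) ^ 2 \<le> 2 * \<eta> * (c - M + B * norm (x1 - u)) + 2 * \<eta> * B * norm (y - u)"
      by (simp add: algebra_simps)
  qed (use \<open>\<eta> > 0\<close> \<open>B \<ge> 0\<close> in simp)
  then show ?thesis
    by (intro bounded_subset[OF bounded_cball[of u R]]) (auto simp: dist_norm norm_minus_commute)
qed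

lemma prox_exists:
  fixes h :: "'a::euclidean_space \<Rightarrow> ereal"
  assumes "proper_ext h" and "lsc_ext h" and "convex_ext h" and "\<eta> > 0"
  shows "\<exists>p. \<forall>z. h p + ereal (norm (p - u) ^ 2 / (2 * \<eta>)) \<le> h z + ereal (norm (z - u) ^ 2 / (2 * \<eta>))"
proof -
  obtain x1 a B M where hx1: "h x1 = ereal a" and "B \<ge> 0"
    and minorant: "\<And>y. ereal (M - B * norm (y - x1)) \<le> h y"
    using proper_convex_lsc_norm_minorant[OF assms(1-3)] by metis
  define \<phi> where "\<phi> y = h y + ereal (norm (y - u) ^ 2 / (2 * \<eta>))" for y
  define K where "K = {y. \<phi> y \<le> ereal (a + norm (x1 - u) ^ 2 / (2 * \<eta>))}"
  have closed_sublevel: "closed {y. \<phi> y \<le> d}" for d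
    unfolding \<phi>_def using assms(2,4) unfolding lsc_ext_def
    by (intro closed_sublevel_add_continuous continuous_intros) auto
  have "bounded K"
    unfolding K_def \<phi>_def by (rule bounded_sublevel_prox_objective[OF minorant \<open>B \<ge> 0\<close> assms(4)])
  moreover have "closed K" unfolding K_def by (rule closed_sublevel)
  moreover have "x1 \<in> K" by (simp add: K_def \<phi>_def hx1)
  ultimately obtain p where "p \<in> K" "\<forall>y\<in>K. \<phi> p \<le> \<phi> y"
    using lsc_attains_min_on_compact[of K \<phi>] closed_sublevel compact_eq_bounded_closed by blast
  then have "\<phi> p \<le> \<phi> z" for z
    by (cases "z \<in> K") (auto simp: K_def)
  then show ?thesis unfolding \<phi>_def by blast
qed

lemma prox_minimizes:
  fixes h :: "'a::euclidean_space \<Rightarrow> ereal"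
  assumes "proper_ext h" and "lsc_ext h" and "convex_ext h" and "\<eta> > 0"
  shows "h (prox \<eta> h u) + ereal (norm (prox \<eta> h u - u) ^ 2 / (2 * \<eta>))
           \<le> h z + ereal (norm (z - u) ^ 2 / (2 * \<eta>))"
  using someI_ex[OF prox_exists[OF assms, of u]] unfolding prox_def by blast

lemma prox_finite:
  fixes h :: "'a::euclidean_space \<Rightarrow> ereal"
  assumes "proper_ext h" and "lsc_ext h" and "convex_ext h" and "\<eta> > 0"
  shows "h (prox \<eta> h u) = ereal (real_of_ereal (h (prox \<eta> h u)))"
proof -
  obtain z where "h z \<noteq> \<infinity>" using assms(1) unfolding proper_ext_def by blast
  with prox_minimizes[OF assms, of u z] have "h (prox \<eta> h u) \<noteq> \<infinity>" by auto
  moreover have "h (prox \<eta> h u) \<noteq> -\<infinity>" using assms(1) unfolding proper_ext_def by blast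
  ultimately show ?thesis by (cases "h (prox \<eta> h u)") auto
qed

lemma norm_convex_combination_sq:
  fixes a b :: "'a::real_inner"
  shows "norm ((1 - s) *\<^sub>R a + s *\<^sub>R b) ^ 2
           = (1 - s) * norm a ^ 2 + s * norm b ^ 2 - s * (1 - s) * norm (a - b) ^ 2"
  by (simp add: power2_norm_eq_inner inner_add_left inner_add_right inner_diff_left
      inner_diff_right inner_commute[of b a] algebra_simps)

text \<open>The proximal objective is \<open>1/\<eta>\<close>-strongly convex, so it exceeds its minimum at \<open>z\<close> by at least
  \<open>norm (z - p)\<^sup>2 / (2 * \<eta>)\<close>; comparing \<open>p\<close> with \<open>(1 - s) * p + s * z\<close> and letting \<open>s \<rightarrow> 0\<close>.\<close>

lemma prox_three_point:
  fixes h :: "'a::euclidean_space \<Rightarrow> ereal" and u :: 'a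
  assumes "proper_ext h" and "lsc_ext h" and "convex_ext h" and "\<eta> > 0"
    and hz: "h z = ereal hz"
  defines "p \<equiv> prox \<eta> h u"
  shows "real_of_ereal (h p) + norm (p - u) ^ 2 / (2 * \<eta>)
           \<le> hz + norm (z - u) ^ 2 / (2 * \<eta>) - norm (z - p) ^ 2 / (2 * \<eta>)"
proof -
  define hp where "hp = real_of_ereal (h p)"
  have hp: "h p = ereal hp" unfolding hp_def p_def by (rule prox_finite[OF assms(1-4)])
  define X where "X = hp + norm (p - u) ^ 2 / (2 * \<eta>)"
  define Y where "Y = hz + norm (z - u) ^ 2 / (2 * \<eta>)"
  define E where "E = norm (z - p) ^ 2 / (2 * \<eta>)"
  have perturbed: "X \<le> Y - (1 - s) * E" if s: "0 < s" "s < 1" for s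
  proof -
    define w where "w = (1 - s) *\<^sub>R p + s *\<^sub>R z"
    have "h w \<le> ereal (1 - s) * h p + ereal s * h z"
      using assms(3) s unfolding convex_ext_def w_def by auto
    then have hw: "h w \<le> ereal ((1 - s) * hp + s * hz)" using hp hz by simp
    have "h w + ereal (norm (w - u) ^ 2 / (2 * \<eta>))
                 \<le> ereal ((1 - s) * hp + s * hz + norm (w - u) ^ 2 / (2 * \<eta>))"
      using add_right_mono[OF hw, of "ereal (norm (w - u) ^ 2 / (2 * \<eta>))"] by simp
    moreover have "ereal X \<le> h w + ereal (norm (w - u) ^ 2 / (2 * \<eta>))"
      using prox_minimizes[OF assms(1-4), of u w] hp by (simp add: X_def p_def)
    ultimately have "ereal X \<le> ereal ((1 - s) * hp + s * hz + norm (w - u) ^ 2 / (2 * \<eta>))"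
      by (rule order_trans[rotated])
    then have "X \<le> (1 - s) * hp + s * hz + norm (w - u) ^ 2 / (2 * \<eta>)" by simp
    moreover have "w - u = (1 - s) *\<^sub>R (p - u) + s *\<^sub>R (z - u)"
      by (simp add: w_def algebra_simps)
    then have "norm (w - u) ^ 2 = (1 - s) * norm (p - u) ^ 2 + s * norm (z - u) ^ 2
                 - s * (1 - s) * norm (z - p) ^ 2"
      by (simp add: norm_convex_combination_sq norm_minus_commute)
    then have "norm (w - u) ^ 2 / (2 * \<eta>) = (1 - s) * (norm (p - u) ^ 2 / (2 * \<eta>))
                 + s * (norm (z - u) ^ 2 / (2 * \<eta>)) - s * (1 - s) * E"
      unfolding E_def by (simp add: diff_divide_distrib add_divide_distrib)
    ultimately have "X \<le> (1 - s) * X + s * Y - s * (1 - s) * E"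
      unfolding X_def Y_def by (simp add: algebra_simps)
    then have "s * X \<le> s * (Y - (1 - s) * E)" by (simp add: algebra_simps)
    then show ?thesis using s by simp
  qed
  have "((\<lambda>s. Y - (1 - s) * E) \<longlongrightarrow> Y - (1 - 0) * E) (at_right 0)"
    by (intro tendsto_intros)
  moreover have "\<forall>\<^sub>F s in at_right 0. X \<le> Y - (1 - s) * E"
    using eventually_at_right_real[of 0 "1::real"] perturbed by (auto elim!: eventually_mono)
  ultimately have "X \<le> Y - E"
    by (intro tendsto_lowerbound) (auto simp: trivial_limit_at_right_real)
  then show ?thesis unfolding X_def Y_def E_def hp_def .
qed

section \<open>Smooth functions and elementary inequalities\<close>

lemma lipschitz_gradient_upper_bound:
  fixes f :: "'a::real_inner \<Rightarrow> real"
  assumes deriv: "\<And>z. (f has_derivative (\<lambda>v. g z \<bullet> v)) (at z)"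
    and lip: "\<And>z w. norm (g z - g w) \<le> L * norm (z - w)"
  shows "f y \<le> f x + g x \<bullet> (y - x) + L / 2 * norm (y - x) ^ 2"
proof -
  define \<gamma> where "\<gamma> t = x + t *\<^sub>R (y - x)" for t :: real
  define \<psi> where "\<psi> t = f (\<gamma> t) - t * (g x \<bullet> (y - x)) - L / 2 * t ^ 2 * norm (y - x) ^ 2" for t
  have "((\<lambda>t. f (\<gamma> t)) has_real_derivative g (\<gamma> t) \<bullet> (y - x)) (at t)" for t
  proof -
    have "((\<lambda>t. f (\<gamma> t)) has_derivative (\<lambda>s. g (\<gamma> t) \<bullet> (s *\<^sub>R (y - x)))) (at t)"
      unfolding \<gamma>_def by (rule has_derivative_compose[OF _ deriv]) (auto intro!: derivative_eq_intros)
    moreover have "(\<lambda>s. g (\<gamma> t) \<bullet> (s *\<^sub>R (y - x))) = (*) (g (\<gamma> t) \<bullet> (y - x))"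
      by (auto simp: mult.commute)
    ultimately show ?thesis by (simp add: has_field_derivative_def)
  qed
  then have deriv_\<psi>: "(\<psi> has_real_derivative
      g (\<gamma> t) \<bullet> (y - x) - g x \<bullet> (y - x) - L * t * norm (y - x) ^ 2) (at t)" for t
    unfolding \<psi>_def by (auto intro!: derivative_eq_intros)
  have "g (\<gamma> t) \<bullet> (y - x) - g x \<bullet> (y - x) \<le> L * t * norm (y - x) ^ 2" if "0 \<le> t" for t
  proof -
    have "g (\<gamma> t) \<bullet> (y - x) - g x \<bullet> (y - x) \<le> norm (g (\<gamma> t) - g x) * norm (y - x)"
      by (metis Cauchy_Schwarz_ineq2 abs_le_D1 inner_diff_left)
    also have "\<dots> \<le> L * norm (\<gamma> t - x) * norm (y - x)"
      by (intro mult_right_mono lip) simp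
    also have "\<dots> = L * t * norm (y - x) ^ 2"
      using that by (simp add: \<gamma>_def power2_eq_square)
    finally show ?thesis .
  qed
  then have "\<psi> 1 \<le> \<psi> 0"
    using deriv_\<psi> by (intro DERIV_nonpos_imp_nonincreasing[of 0 1]) force+
  then show ?thesis by (simp add: \<psi>_def \<gamma>_def)
qed

lemma lipschitz_gradient_descent:
  fixes f :: "'a::real_inner \<Rightarrow> real"
  assumes deriv: "\<And>z. (f has_derivative (\<lambda>v. g z \<bullet> v)) (at z)"
    and lip: "\<And>z w. norm (g z - g w) \<le> L * norm (z - w)"
  shows "\<bar>f y - f x - g x \<bullet> (y - x)\<bar> \<le> L / 2 * norm (y - x) ^ 2"
proof -
  have "((\<lambda>x. - f x) has_derivative (\<lambda>v. - g z \<bullet> v)) (at z)" for z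
    using has_derivative_minus[OF deriv[of z]] by simp
  moreover have "norm (- g z - - g w) \<le> L * norm (z - w)" for z w
    using lip[of z w] by (simp add: norm_minus_commute)
  ultimately have "- f y \<le> - f x + - g x \<bullet> (y - x) + L / 2 * norm (y - x) ^ 2"
    by (rule lipschitz_gradient_upper_bound)
  with lipschitz_gradient_upper_bound[OF deriv lip, of y x] show ?thesis
    unfolding abs_le_iff by simp
qed

lemma inner_le_young:
  fixes a b :: "'a::real_inner"
  assumes "\<eta> > 0"
  shows "a \<bullet> b \<le> \<eta> / 2 * norm a ^ 2 + norm b ^ 2 / (2 * \<eta>)"
proof -
  have "0 \<le> norm (\<eta> *\<^sub>R a - b) ^ 2" by simp
  also have "\<dots> = \<eta>^2 * norm a ^ 2 - 2 * \<eta> * (a \<bullet> b) + norm b ^ 2"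
    by (simp add: power2_norm_eq_inner inner_diff_left inner_diff_right inner_commute[of b a]
        algebra_simps) (simp add: power2_eq_square)
  also have "\<dots> = 2 * \<eta> * (\<eta> / 2 * norm a ^ 2 + norm b ^ 2 / (2 * \<eta>)) - 2 * \<eta> * (a \<bullet> b)"
    using assms by (simp add: field_simps power2_eq_square)
  finally show ?thesis using assms by simp
qed

lemma norm_add_sq:
  fixes a b :: "'a::real_inner"
  shows "norm (a + b) ^ 2 = norm a ^ 2 + 2 * (a \<bullet> b) + norm b ^ 2"
  unfolding dot_norm by (simp add: field_simps)

lemma sum_norm_diff_mean_sq:
  fixes \<zeta> :: "nat \<Rightarrow> 'a::real_inner"
  assumes "n \<ge> 1" and "a = (1 / real n) *\<^sub>R (\<Sum>i<n. \<zeta> i)"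
  shows "(\<Sum>i<n. norm (a - \<zeta> i) ^ 2) = (\<Sum>i<n. norm (\<zeta> i) ^ 2) - real n * norm a ^ 2"
proof -
  have sum_\<zeta>: "(\<Sum>i<n. \<zeta> i) = real n *\<^sub>R a" using assms by simp
  have "(\<Sum>i<n. norm (a - \<zeta> i) ^ 2) = (\<Sum>i<n. norm a ^ 2 - 2 * (a \<bullet> \<zeta> i) + norm (\<zeta> i) ^ 2)"
    using norm_add_sq[of a "- \<zeta> _"] by simp
  also have "\<dots> = real n * norm a ^ 2 - 2 * (a \<bullet> (\<Sum>i<n. \<zeta> i)) + (\<Sum>i<n. norm (\<zeta> i) ^ 2)"
    by (simp add: sum.distrib sum_subtractf inner_sum_right sum_distrib_left)
  finally show ?thesis by (simp add: sum_\<zeta> power2_norm_eq_inner)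
qed

lemma norm_add_sq_le_young:
  fixes a b :: "'a::real_inner"
  assumes "\<beta> > 0"
  shows "norm (a + b) ^ 2 \<le> (1 + \<beta>) * norm a ^ 2 + (1 + 1 / \<beta>) * norm b ^ 2"
proof -
  from norm_add_sq[of a b] inner_le_young[OF assms, of a b] assms show ?thesis by (simp add: field_simps)
qed

lemma norm_add_scaleR_sq:
  fixes a d :: "'a::real_inner"
  shows "norm (a + c *\<^sub>R d) ^ 2 = norm a ^ 2 + 2 * c * (d \<bullet> a) + c ^ 2 * norm d ^ 2"
  by (simp add: power2_norm_eq_inner inner_add_left inner_add_right inner_commute[of a d]
      algebra_simps) (simp add: power2_eq_square)

section \<open>Expectations over finitely supported distributions\<close>

abbreviation \<E> :: "'b pmf \<Rightarrow> ('b \<Rightarrow> real) \<Rightarrow> real" where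
  "\<E> p f \<equiv> measure_pmf.expectation p f"

lemma finite_set_replicate_pmf:
  "finite (set_pmf p) \<Longrightarrow> finite (set_pmf (replicate_pmf k p))"
  unfolding set_replicate_pmf lists_eq_set
  by (rule finite_subset[OF _ finite_lists_length_eq[of "set_pmf p" k]]) auto

lemma length_of_set_replicate_pmf: "xs \<in> set_pmf (replicate_pmf k p) \<Longrightarrow> length xs = k"
  by (simp add: set_replicate_pmf)

lemma expectation_bind_pmf_finite:
  fixes g :: "'c \<Rightarrow> 'd::{banach, second_countable_topology}"
  assumes "finite (set_pmf p)" and "\<And>x. x \<in> set_pmf p \<Longrightarrow> finite (set_pmf (f x))"
  shows "measure_pmf.expectation (p \<bind> f) g = measure_pmf.expectation p (\<lambda>x. measure_pmf.expectation (f x) g)"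
proof -
  have "measure_pmf.expectation (p \<bind> f) g = (\<Sum>a\<in>set_pmf p. pmf p a *\<^sub>R measure_pmf.expectation (f a) g)"
    by (rule pmf_expectation_bind[OF assms]) auto
  also have "\<dots> = measure_pmf.expectation p (\<lambda>x. measure_pmf.expectation (f x) g)"
    by (rule integral_measure_pmf[OF assms(1), symmetric]) auto
  finally show ?thesis .
qed

lemma expectation_cong_set_pmf:
  "(\<And>x. x \<in> set_pmf p \<Longrightarrow> f x = g x) \<Longrightarrow> \<E> p f = \<E> p g"
  by (rule integral_cong_AE) (auto simp: AE_measure_pmf_iff)

lemma expectation_mono_finite:
  assumes "finite (set_pmf p)" and "\<And>x. x \<in> set_pmf p \<Longrightarrow> f x \<le> g x"
  shows "\<E> p f \<le> \<E> p g"
  using assms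
  by (intro integral_mono_AE) (auto simp: AE_measure_pmf_iff intro: integrable_measure_pmf_finite)

lemma expectation_replicate_pmf_Suc:
  fixes g :: "'b list \<Rightarrow> 'c::{banach, second_countable_topology}"
  assumes "finite (set_pmf p)"
  shows "measure_pmf.expectation (replicate_pmf (Suc k) p) g
           = measure_pmf.expectation p (\<lambda>x. measure_pmf.expectation (replicate_pmf k p) (\<lambda>xs. g (x # xs)))"
  using assms finite_set_replicate_pmf
  by (simp only: replicate_pmf.simps, subst expectation_bind_pmf_finite)
    (auto intro!: integral_cong_AE simp: AE_measure_pmf_iff expectation_bind_pmf_finite)

lemma expectation_replicate_pmf_take_nth:
  assumes "finite (set_pmf p)" and "k < T"
  shows "\<E> (replicate_pmf T p) (\<lambda>xs. G (take k xs) (xs ! k))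
           = \<E> (replicate_pmf k p) (\<lambda>xs. \<E> p (G xs))"
proof -
  obtain r where T: "T = k + Suc r" using \<open>k < T\<close> by (metis add_Suc_right less_imp_Suc_add)
  have "\<E> (replicate_pmf T p) (\<lambda>xs. G (take k xs) (xs ! k))
      = \<E> (replicate_pmf k p) (\<lambda>xs. \<E> (replicate_pmf (Suc r) p) (\<lambda>ys. G (take k (xs @ ys)) ((xs @ ys) ! k)))"
    unfolding T replicate_pmf_distrib using assms(1) finite_set_replicate_pmf
    by (subst expectation_bind_pmf_finite)
      (auto intro!: expectation_cong_set_pmf simp: expectation_bind_pmf_finite)
  also have "\<dots> = \<E> (replicate_pmf k p) (\<lambda>xs. \<E> (replicate_pmf (Suc r) p) (\<lambda>ys. G xs (ys ! 0)))"
    by (intro expectation_cong_set_pmf) (simp add: length_of_set_replicate_pmf nth_append)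
  also have "\<dots> = \<E> (replicate_pmf k p) (\<lambda>xs. \<E> p (G xs))"
    by (simp only: expectation_replicate_pmf_Suc[OF assms(1)] nth_Cons_0) simp
  finally show ?thesis .
qed

lemma expectation_pmf_of_set_scaleR:
  fixes f :: "'b \<Rightarrow> 'c::{banach, second_countable_topology}"
  assumes "finite A" and "A \<noteq> {}"
  shows "measure_pmf.expectation (pmf_of_set A) f = (1 / real (card A)) *\<^sub>R (\<Sum>a\<in>A. f a)"
  using assms by (subst integral_measure_pmf[of A]) (auto simp: scaleR_sum_right)

lemma expectation_norm_sum_iid_sq:
  fixes X :: "'b \<Rightarrow> 'a::euclidean_space"
  assumes fin: "finite (set_pmf p)" and mean_zero: "measure_pmf.expectation p X = 0"
  shows "\<E> (replicate_pmf k p) (\<lambda>xs. norm (\<Sum>x\<leftarrow>xs. X x) ^ 2) = real k * \<E> p (\<lambda>x. norm (X x) ^ 2)"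
proof (induction k)
  case (Suc k)
  define S where "S xs = (\<Sum>x\<leftarrow>xs. X x)" for xs
  define V where "V = \<E> p (\<lambda>x. norm (X x) ^ 2)"
  let ?R = "replicate_pmf k p"
  have fin_R: "finite (set_pmf ?R)" using fin by (rule finite_set_replicate_pmf)
  have "\<E> ?R (\<lambda>xs. norm (X x + S xs) ^ 2)
          = \<E> ?R (\<lambda>xs. norm (X x) ^ 2 + 2 * (X x \<bullet> S xs) + norm (S xs) ^ 2)" for x
    by (simp only: norm_add_sq)
  also have "\<dots> x = norm (X x) ^ 2 + 2 * \<E> ?R (\<lambda>xs. X x \<bullet> S xs) + \<E> ?R (\<lambda>xs. norm (S xs) ^ 2)" for x
    by (simp add: integrable_measure_pmf_finite[OF fin_R])
  also have "\<dots> x = norm (X x) ^ 2 + 2 * (X x \<bullet> measure_pmf.expectation ?R S) + real k * V" for x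
    using Suc.IH by (simp add: integrable_measure_pmf_finite[OF fin_R] S_def[abs_def] V_def)
  finally have "\<E> (replicate_pmf (Suc k) p) (\<lambda>xs. norm (S xs) ^ 2)
      = \<E> p (\<lambda>x. norm (X x) ^ 2 + 2 * (X x \<bullet> measure_pmf.expectation ?R S) + real k * V)"
    by (simp add: expectation_replicate_pmf_Suc[OF fin] S_def del: replicate_pmf.simps)
  also have "\<dots> = V + 2 * (measure_pmf.expectation p X \<bullet> measure_pmf.expectation ?R S) + real k * V"
    by (simp add: integrable_measure_pmf_finite[OF fin] V_def)
  also have "\<dots> = real (Suc k) * V"
    using mean_zero by (simp add: algebra_simps)
  finally show ?case unfolding S_def V_def .
qed simp

section \<open>One proximal gradient step\<close>

locale proxsvrg_problem =
  fixes n :: nat and fs :: "nat \<Rightarrow> 'a::euclidean_space \<Rightarrow> real" and grad :: "nat \<Rightarrow> 'a \<Rightarrow> 'a"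
    and h :: "'a \<Rightarrow> ereal" and L \<eta> :: real
  assumes n_pos: "n \<ge> 1" and eta_pos: "\<eta> > 0"
    and grad: "\<And>i x. i < n \<Longrightarrow> (fs i has_derivative (\<lambda>v. grad i x \<bullet> v)) (at x)"
    and smooth: "\<And>i x y. i < n \<Longrightarrow> norm (grad i x - grad i y) \<le> L * norm (x - y)"
    and h_proper: "proper_ext h" and h_lsc: "lsc_ext h" and h_convex: "convex_ext h"
begin

abbreviation grad_f :: "'a \<Rightarrow> 'a" where
  "grad_f \<equiv> full_grad n grad"

definition f_avg :: "'a \<Rightarrow> real" where
  "f_avg x = (1 / real n) * (\<Sum>i<n. fs i x)"

text \<open>\<open>real_of_ereal\<close> sends \<open>\<infinity>\<close> to \<open>0\<close>, so \<open>h_real\<close> and \<open>F_real\<close> are only meaningful on the domain of \<open>h\<close>.\<close>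

definition h_real :: "'a \<Rightarrow> real" where
  "h_real x = real_of_ereal (h x)"

definition F_real :: "'a \<Rightarrow> real" where
  "F_real x = f_avg x + h_real x"

lemma f_avg_has_derivative: "(f_avg has_derivative (\<lambda>v. grad_f x \<bullet> v)) (at x)"
proof -
  have "((\<lambda>x. \<Sum>i<n. fs i x) has_derivative (\<lambda>v. \<Sum>i<n. grad i x \<bullet> v)) (at x)"
    using grad by (intro has_derivative_sum) auto
  then have "(f_avg has_derivative (\<lambda>v. (1 / real n) * (\<Sum>i<n. grad i x \<bullet> v))) (at x)"
    unfolding f_avg_def[abs_def] by (rule has_derivative_mult_right)
  then show ?thesis by (simp add: full_grad_def inner_sum_left)
qed

lemma grad_f_lipschitz: "norm (grad_f x - grad_f y) \<le> L * norm (x - y)"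
proof -
  have "norm (grad_f x - grad_f y) = (1 / real n) * norm (\<Sum>i<n. grad i x - grad i y)"
    by (simp add: full_grad_def sum_subtractf flip: scaleR_diff_right)
  also have "\<dots> \<le> (1 / real n) * (\<Sum>i<n. L * norm (x - y))"
    using smooth by (intro mult_left_mono order_trans[OF norm_sum sum_mono]) auto
  also have "\<dots> = L * norm (x - y)" using n_pos by simp
  finally show ?thesis .
qed

lemma f_avg_descent: "\<bar>f_avg y - f_avg x - grad_f x \<bullet> (y - x)\<bar> \<le> L / 2 * norm (y - x) ^ 2"
  by (rule lipschitz_gradient_descent[OF f_avg_has_derivative grad_f_lipschitz])

lemma ereal_F_real: "h x \<noteq> \<infinity> \<Longrightarrow> ereal (f_avg x) + h x = ereal (F_real x)"
  using h_proper unfolding proper_ext_def F_real_def h_real_def by (cases "h x") auto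

lemma h_prox: "h (prox \<eta> h u) = ereal (h_real (prox \<eta> h u))"
  unfolding h_real_def by (rule prox_finite[OF h_proper h_lsc h_convex eta_pos])

text \<open>Three-point property of the proximal map plus the descent lemma at \<open>y\<close> and at \<open>z\<close>.\<close>

lemma prox_step_bound:
  fixes x d z :: 'a
  assumes hz: "h z = ereal (h_real z)"
  defines "y \<equiv> prox \<eta> h (x - \<eta> *\<^sub>R d)"
  shows "F_real y \<le> F_real z + (grad_f x - d) \<bullet> (y - z) + (L / 2 - 1 / (2 * \<eta>)) * norm (y - x) ^ 2
            + (L / 2 + 1 / (2 * \<eta>)) * norm (z - x) ^ 2 - norm (z - y) ^ 2 / (2 * \<eta>)"
proof -
  have three_point: "h_real y + norm (y - (x - \<eta> *\<^sub>R d)) ^ 2 / (2 * \<eta>)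
         \<le> h_real z + norm (z - (x - \<eta> *\<^sub>R d)) ^ 2 / (2 * \<eta>) - norm (z - y) ^ 2 / (2 * \<eta>)"
    using prox_three_point[OF h_proper h_lsc h_convex eta_pos hz] unfolding y_def h_real_def by simp
  have shift: "norm (w - (x - \<eta> *\<^sub>R d)) ^ 2 / (2 * \<eta>)
                 = norm (w - x) ^ 2 / (2 * \<eta>) + d \<bullet> (w - x) + \<eta> * norm d ^ 2 / 2" for w
  proof -
    have "w - (x - \<eta> *\<^sub>R d) = (w - x) + \<eta> *\<^sub>R d" by (simp add: algebra_simps)
    then have "norm (w - (x - \<eta> *\<^sub>R d)) ^ 2 = norm (w - x) ^ 2 + 2 * \<eta> * (d \<bullet> (w - x)) + \<eta> ^ 2 * norm d ^ 2"
      by (simp only: norm_add_scaleR_sq)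
    then show ?thesis
      using eta_pos by (simp add: field_simps power2_eq_square)
  qed
  have "f_avg y \<le> f_avg x + grad_f x \<bullet> (y - x) + L / 2 * norm (y - x) ^ 2"
    and "f_avg x \<le> f_avg z - grad_f x \<bullet> (z - x) + L / 2 * norm (z - x) ^ 2"
    using abs_le_D1[OF f_avg_descent[of y x]] abs_le_D2[OF f_avg_descent[of z x]] by linarith+
  moreover have "(grad_f x - d) \<bullet> (y - z)
                   = grad_f x \<bullet> (y - x) - grad_f x \<bullet> (z - x) - d \<bullet> (y - x) + d \<bullet> (z - x)"
    by (simp add: inner_diff_left inner_diff_right)
  ultimately show ?thesis
    using three_point shift[of y] shift[of z] by (simp add: F_real_def algebra_simps)
qed

text \<open>The step along an inexact direction \<open>v\<close> is compared with the exact proximal gradient step \<open>x_bar\<close>;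
  the error \<open>grad_f x - v\<close> enters only through Young's inequality.\<close>

lemma inexact_prox_step_bound:
  fixes x v :: 'a
  assumes hx: "h x = ereal (h_real x)"
  defines "x_new \<equiv> prox \<eta> h (x - \<eta> *\<^sub>R v)" and "x_bar \<equiv> prox \<eta> h (x - \<eta> *\<^sub>R grad_f x)"
  shows "F_real x_new \<le> F_real x + \<eta> / 2 * norm (grad_f x - v) ^ 2
           + (L / 2 - 1 / (2 * \<eta>)) * norm (x_new - x) ^ 2 + (L - 1 / (2 * \<eta>)) * norm (x_bar - x) ^ 2"
proof -
  have "F_real x_bar \<le> F_real x + (L / 2 - 1 / (2 * \<eta>)) * norm (x_bar - x) ^ 2 - norm (x_bar - x) ^ 2 / (2 * \<eta>)"
    using prox_step_bound[OF hx, of x "grad_f x"] by (simp add: x_bar_def norm_minus_commute)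
  moreover have "F_real x_new \<le> F_real x_bar + (grad_f x - v) \<bullet> (x_new - x_bar)
      + (L / 2 - 1 / (2 * \<eta>)) * norm (x_new - x) ^ 2
      + (L / 2 + 1 / (2 * \<eta>)) * norm (x_bar - x) ^ 2 - norm (x_new - x_bar) ^ 2 / (2 * \<eta>)"
    using prox_step_bound[where z=x_bar and x=x and d=v] h_prox
    by (simp add: x_bar_def x_new_def norm_minus_commute)
  moreover have "(grad_f x - v) \<bullet> (x_new - x_bar)
                   \<le> \<eta> / 2 * norm (grad_f x - v) ^ 2 + norm (x_new - x_bar) ^ 2 / (2 * \<eta>)"
    by (rule inner_le_young[OF eta_pos])
  ultimately show ?thesis by (simp add: algebra_simps)
qed

lemma norm_prox_gradient_step: "norm (prox \<eta> h (x - \<eta> *\<^sub>R grad_f x) - x) = \<eta> * norm (grad_map n grad h \<eta> x)"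
  using eta_pos by (simp add: grad_map_def norm_minus_commute)

end

section \<open>The Lyapunov function of ProxSVRG\<close>

locale proxsvrg_run = proxsvrg_problem +
  fixes m b :: nat and x0 :: 'a
  assumes m_pos: "m \<ge> 1" and b_pos: "b \<ge> 1" and h_x0: "h x0 \<noteq> \<infinity>"
    and step_size: "L / 2 - 1 / (2 * \<eta>) + \<eta> * L^2 / real b * (real m - 1) * (1 + 2 * real m) \<le> 0"
begin

definition iterate :: "nat list list \<Rightarrow> nat \<Rightarrow> 'a" where
  "iterate Is k = fst (svrg_state n grad h \<eta> m b x0 Is k)"

text \<open>The snapshot used by inner step \<open>k\<close>: \<open>svrg_state\<close> refreshes it only while taking a step with
  \<open>k mod m = 0\<close>, so it is read off lazily here.\<close>

definition snapshot :: "nat list list \<Rightarrow> nat \<Rightarrow> 'a" where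
  "snapshot Is k = (if k mod m = 0 then iterate Is k else snd (svrg_state n grad h \<eta> m b x0 Is k))"

definition vr_grad :: "'a \<Rightarrow> 'a \<Rightarrow> nat list \<Rightarrow> 'a" where
  "vr_grad x x_snap I = (1 / real b) *\<^sub>R (\<Sum>i\<leftarrow>I. grad i x - grad i x_snap) + grad_f x_snap"

definition lyap_coeff :: "nat \<Rightarrow> real" where
  "lyap_coeff t = \<eta> * L^2 / real b * real (m - t)"

definition lyapunov :: "nat list list \<Rightarrow> nat \<Rightarrow> real" where
  "lyapunov Is k = F_real (iterate Is k) + lyap_coeff (k mod m) * norm (iterate Is k - snapshot Is k) ^ 2"

lemma svrg_state_Suc_eq:
  "svrg_state n grad h \<eta> m b x0 Is (Suc k)
     = (prox \<eta> h (iterate Is k - \<eta> *\<^sub>R vr_grad (iterate Is k) (snapshot Is k) (Is ! k)), snapshot Is k)"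
  by (simp add: svrg_step_def Let_def iterate_def snapshot_def vr_grad_def)

lemma iterate_0: "iterate Is 0 = x0"
  by (simp add: iterate_def)

lemma iterate_Suc:
  "iterate Is (Suc k) = prox \<eta> h (iterate Is k - \<eta> *\<^sub>R vr_grad (iterate Is k) (snapshot Is k) (Is ! k))"
  unfolding iterate_def[of Is "Suc k"] svrg_state_Suc_eq by simp

lemma snapshot_Suc:
  "snapshot Is (Suc k) = (if Suc k mod m = 0 then iterate Is (Suc k) else snapshot Is k)"
  unfolding snapshot_def[of Is "Suc k"] iterate_def[of Is "Suc k"] svrg_state_Suc_eq by simp

lemma h_iterate: "h (iterate Is k) = ereal (h_real (iterate Is k))"
proof (cases k)
  case 0
  then show ?thesis
    using h_x0 h_proper unfolding proper_ext_def h_real_def by (cases "h x0") (auto simp: iterate_0)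
qed (simp add: iterate_Suc h_prox)

lemma svrg_state_take: "svrg_state n grad h \<eta> m b x0 Is k = svrg_state n grad h \<eta> m b x0 (take k Is) k"
proof -
  have "svrg_state n grad h \<eta> m b x0 Is j = svrg_state n grad h \<eta> m b x0 (take k Is) j" if "j \<le> k" for j
    using that by (induction j) auto
  then show ?thesis by simp
qed

lemma iterate_take: "iterate Is k = iterate (take k Is) k"
  and snapshot_take: "snapshot Is k = snapshot (take k Is) k"
  unfolding iterate_def snapshot_def by (simp_all only: svrg_state_take[of Is k])

lemma lyapunov_0: "lyapunov Is 0 = F_real x0"
  by (simp add: lyapunov_def snapshot_def iterate_0)

lemma F_real_le_lyapunov: "F_real (iterate Is k) \<le> lyapunov Is k"
  using eta_pos by (simp add: lyapunov_def lyap_coeff_def)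

text \<open>At the end of an epoch the snapshot is refreshed, but then \<open>lyap_coeff m = 0\<close>, so the
  same formula holds in both cases.\<close>

lemma lyapunov_Suc_eq:
  "lyapunov Is (Suc k)
     = F_real (iterate Is (Suc k)) + lyap_coeff (Suc (k mod m)) * norm (iterate Is (Suc k) - snapshot Is k) ^ 2"
proof (cases "Suc (k mod m) = m")
  case True
  then have "Suc k mod m = 0" by (metis mod_Suc)
  with True show ?thesis by (simp add: lyapunov_def snapshot_Suc lyap_coeff_def)
next
  case False
  then have "Suc k mod m = Suc (k mod m)" by (metis mod_Suc)
  with False show ?thesis by (simp add: lyapunov_def snapshot_Suc)
qed

lemma lyap_coeff_bounds:
  assumes "t < m"
  shows "L / 2 - 1 / (2 * \<eta>) + lyap_coeff (Suc t) * (1 + 2 * real m) \<le> 0"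
    and "lyap_coeff (Suc t) * (1 + 1 / (2 * real m)) + \<eta> * L^2 / real b / 2 \<le> lyap_coeff t"
proof -
  define \<kappa> where "\<kappa> = \<eta> * L^2 / real b"
  have "\<kappa> \<ge> 0" using eta_pos by (simp add: \<kappa>_def)
  have c_Suc: "lyap_coeff (Suc t) = \<kappa> * (real m - real t - 1)"
    and c_t: "lyap_coeff t = \<kappa> * (real m - real t)"
    using assms by (simp_all add: lyap_coeff_def \<kappa>_def of_nat_diff)
  have "lyap_coeff (Suc t) \<le> \<kappa> * (real m - 1)"
    unfolding c_Suc using \<open>\<kappa> \<ge> 0\<close> by (intro mult_left_mono) auto
  then have "lyap_coeff (Suc t) * (1 + 2 * real m) \<le> \<kappa> * (real m - 1) * (1 + 2 * real m)"
    by (intro mult_right_mono) auto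
  then show "L / 2 - 1 / (2 * \<eta>) + lyap_coeff (Suc t) * (1 + 2 * real m) \<le> 0"
    using step_size by (simp add: \<kappa>_def)
  have "lyap_coeff (Suc t) \<le> \<kappa> * real m"
    unfolding c_Suc using \<open>\<kappa> \<ge> 0\<close> by (intro mult_left_mono) auto
  then have "lyap_coeff (Suc t) / (2 * real m) \<le> \<kappa> / 2"
    using m_pos by (simp add: field_simps)
  moreover have "lyap_coeff (Suc t) * (1 + 1 / (2 * real m))
                   = lyap_coeff (Suc t) + lyap_coeff (Suc t) / (2 * real m)"
    by (simp add: algebra_simps)
  moreover have "lyap_coeff t = lyap_coeff (Suc t) + \<kappa>"
    unfolding c_t c_Suc by (simp add: algebra_simps)
  ultimately show "lyap_coeff (Suc t) * (1 + 1 / (2 * real m)) + \<eta> * L^2 / real b / 2 \<le> lyap_coeff t"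
    by (simp add: \<kappa>_def)
qed

lemma lyapunov_step:
  fixes Is :: "nat list list" and k :: nat
  defines "x \<equiv> iterate Is k" and "x_snap \<equiv> snapshot Is k"
  defines "v \<equiv> vr_grad x x_snap (Is ! k)"
  shows "lyapunov Is (Suc k) \<le> lyapunov Is k
           + \<eta> / 2 * (norm (grad_f x - v) ^ 2 - L^2 / real b * norm (x - x_snap) ^ 2)
           - (\<eta> / 2 - L * \<eta>^2) * norm (grad_map n grad h \<eta> x) ^ 2"
proof -
  define t where "t = k mod m"
  have "t < m" using m_pos by (simp add: t_def)
  define x_new where "x_new = iterate Is (Suc k)"
  define x_bar where "x_bar = prox \<eta> h (x - \<eta> *\<^sub>R grad_f x)"
  define c where "c = lyap_coeff (Suc t)"
  have "c \<ge> 0" using eta_pos by (simp add: c_def lyap_coeff_def)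
  have x_new: "x_new = prox \<eta> h (x - \<eta> *\<^sub>R v)"
    by (simp add: x_new_def iterate_Suc x_def x_snap_def v_def)
  have "F_real x_new \<le> F_real x + \<eta> / 2 * norm (grad_f x - v) ^ 2
           + (L / 2 - 1 / (2 * \<eta>)) * norm (x_new - x) ^ 2 + (L - 1 / (2 * \<eta>)) * norm (x_bar - x) ^ 2"
    unfolding x_new x_bar_def x_def by (rule inexact_prox_step_bound[OF h_iterate])
  moreover have "(L - 1 / (2 * \<eta>)) * norm (x_bar - x) ^ 2 = - (\<eta> / 2 - L * \<eta>^2) * norm (grad_map n grad h \<eta> x) ^ 2"
    using eta_pos by (simp add: x_bar_def norm_prox_gradient_step field_simps power2_eq_square)
  moreover have "c * norm (x_new - x_snap) ^ 2
      \<le> c * (1 + 2 * real m) * norm (x_new - x) ^ 2 + c * (1 + 1 / (2 * real m)) * norm (x - x_snap) ^ 2"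
    using mult_left_mono[OF norm_add_sq_le_young[of "2 * real m" "x_new - x" "x - x_snap"] \<open>c \<ge> 0\<close>] m_pos
    by (simp add: algebra_simps)
  moreover have "(L / 2 - 1 / (2 * \<eta>) + c * (1 + 2 * real m)) * norm (x_new - x) ^ 2 \<le> 0"
    using lyap_coeff_bounds(1)[OF \<open>t < m\<close>] by (simp add: c_def mult_nonpos_nonneg)
  moreover have "(c * (1 + 1 / (2 * real m)) + \<eta> * L^2 / real b / 2) * norm (x - x_snap) ^ 2
                   \<le> lyap_coeff t * norm (x - x_snap) ^ 2"
    using lyap_coeff_bounds(2)[OF \<open>t < m\<close>] by (simp add: c_def mult_right_mono)
  moreover have "lyapunov Is (Suc k) = F_real x_new + c * norm (x_new - x_snap) ^ 2"
    by (simp add: lyapunov_Suc_eq x_new_def c_def t_def x_snap_def)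
  moreover have "lyapunov Is k = F_real x + lyap_coeff t * norm (x - x_snap) ^ 2"
    by (simp add: lyapunov_def x_def x_snap_def t_def)
  ultimately show ?thesis by (simp add: algebra_simps)
qed

lemma grad_f_minus_vr_grad:
  assumes "length I = b"
  shows "grad_f x - vr_grad x x_snap I
           = (1 / real b) *\<^sub>R (\<Sum>i\<leftarrow>I. (grad_f x - grad_f x_snap) - (grad i x - grad i x_snap))"
proof -
  have "(\<Sum>i\<leftarrow>I. grad_f x - grad_f x_snap) = real b *\<^sub>R (grad_f x - grad_f x_snap)"
    unfolding assms[symmetric] by (induction I) (auto simp: algebra_simps)
  then show ?thesis
    using b_pos by (simp add: vr_grad_def sum_list_subtractf scaleR_diff_right)
qed

lemma sample_variance_bound:
  "\<E> (pmf_of_set {..<n}) (\<lambda>i. norm ((grad_f x - grad_f x_snap) - (grad i x - grad i x_snap)) ^ 2)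
     \<le> L^2 * norm (x - x_snap) ^ 2"
proof -
  define \<zeta> where "\<zeta> i = grad i x - grad i x_snap" for i
  define a where "a = grad_f x - grad_f x_snap"
  have a: "a = (1 / real n) *\<^sub>R (\<Sum>i<n. \<zeta> i)"
    by (simp add: a_def \<zeta>_def full_grad_def sum_subtractf scaleR_diff_right)
  have "(\<Sum>i<n. norm (\<zeta> i) ^ 2) \<le> (\<Sum>i<n. (L * norm (x - x_snap)) ^ 2)"
    using smooth by (intro sum_mono power_mono) (auto simp: \<zeta>_def)
  moreover have "0 \<le> real n * norm a ^ 2" by simp
  ultimately have "(\<Sum>i<n. norm (a - \<zeta> i) ^ 2) \<le> (\<Sum>i<n. (L * norm (x - x_snap)) ^ 2)"
    unfolding sum_norm_diff_mean_sq[OF n_pos a] by linarith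
  then show ?thesis
    using n_pos by (simp add: integral_pmf_of_set a_def \<zeta>_def field_simps power_mult_distrib lessThan_empty_iff)
qed

text \<open>With-replacement sampling makes the minibatch error a mean of \<open>b\<close> i.i.d. centred vectors.\<close>

lemma minibatch_variance_bound:
  "\<E> (replicate_pmf b (pmf_of_set {..<n})) (\<lambda>I. norm (grad_f x - vr_grad x x_snap I) ^ 2)
     \<le> L^2 / real b * norm (x - x_snap) ^ 2"
proof -
  let ?U = "pmf_of_set {..<n}"
  define X where "X i = (grad_f x - grad_f x_snap) - (grad i x - grad i x_snap)" for i
  have U: "finite {..<n}" "{..<n} \<noteq> {}" using n_pos by (auto simp: lessThan_empty_iff)
  have "measure_pmf.expectation ?U X = 0"
    using U n_pos by (simp add: expectation_pmf_of_set_scaleR X_def full_grad_def sum_subtractf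
        scaleR_diff_right sum_constant_scaleR)
  then have "\<E> (replicate_pmf b ?U) (\<lambda>I. norm (\<Sum>i\<leftarrow>I. X i) ^ 2) = real b * \<E> ?U (\<lambda>i. norm (X i) ^ 2)"
    using U by (intro expectation_norm_sum_iid_sq) simp_all
  moreover have "\<E> (replicate_pmf b ?U) (\<lambda>I. norm (grad_f x - vr_grad x x_snap I) ^ 2)
      = \<E> (replicate_pmf b ?U) (\<lambda>I. (1 / real b) ^ 2 * norm (\<Sum>i\<leftarrow>I. X i) ^ 2)"
    by (intro expectation_cong_set_pmf)
      (simp add: grad_f_minus_vr_grad length_of_set_replicate_pmf X_def power_divide)
  ultimately have "\<E> (replicate_pmf b ?U) (\<lambda>I. norm (grad_f x - vr_grad x x_snap I) ^ 2)
                     = \<E> ?U (\<lambda>i. norm (X i) ^ 2) / real b"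
    using b_pos by (simp add: power2_eq_square)
  also have "\<dots> \<le> L^2 * norm (x - x_snap) ^ 2 / real b"
    using sample_variance_bound[of x x_snap] by (simp add: X_def divide_right_mono)
  finally show ?thesis by simp
qed

section \<open>Expected descent and the convergence bound\<close>

abbreviation batches :: "nat \<Rightarrow> nat list list pmf" where
  "batches T \<equiv> replicate_pmf T (replicate_pmf b (pmf_of_set {..<n}))"

lemma finite_set_sample: "finite (set_pmf (replicate_pmf b (pmf_of_set {..<n})))"
  using n_pos by (intro finite_set_replicate_pmf) (auto simp: lessThan_empty_iff)

lemma finite_set_batches: "finite (set_pmf (batches T))"
  by (rule finite_set_replicate_pmf[OF finite_set_sample])

lemma expected_lyapunov_step:
  assumes "k < T"
  shows "\<E> (batches T) (\<lambda>Is. lyapunov Is (Suc k)) \<le> \<E> (batches T) (\<lambda>Is. lyapunov Is k)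
           - (\<eta> / 2 - L * \<eta>^2) * \<E> (batches T) (\<lambda>Is. norm (grad_map n grad h \<eta> (iterate Is k)) ^ 2)"
proof -
  define err where "err Is I = norm (grad_f (iterate Is k) - vr_grad (iterate Is k) (snapshot Is k) I) ^ 2
      - L^2 / real b * norm (iterate Is k - snapshot Is k) ^ 2" for Is I
  have int: "integrable (measure_pmf (batches T)) f" for f :: "nat list list \<Rightarrow> real"
    by (rule integrable_measure_pmf_finite[OF finite_set_batches])
  have "\<E> (batches T) (\<lambda>Is. lyapunov Is (Suc k)) \<le> \<E> (batches T) (\<lambda>Is. lyapunov Is k
      + \<eta> / 2 * err Is (Is ! k) - (\<eta> / 2 - L * \<eta>^2) * norm (grad_map n grad h \<eta> (iterate Is k)) ^ 2)"
    unfolding err_def by (intro expectation_mono_finite finite_set_batches lyapunov_step)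
  also have "\<dots> = \<E> (batches T) (\<lambda>Is. lyapunov Is k) + \<eta> / 2 * \<E> (batches T) (\<lambda>Is. err Is (Is ! k))
      - (\<eta> / 2 - L * \<eta>^2) * \<E> (batches T) (\<lambda>Is. norm (grad_map n grad h \<eta> (iterate Is k)) ^ 2)"
    by (simp add: int)
  also have "err Is = err (take k Is)" for Is
    unfolding err_def by (simp only: iterate_take[of Is k] snapshot_take[of Is k])
  then have "\<E> (batches T) (\<lambda>Is. err Is (Is ! k)) = \<E> (batches T) (\<lambda>Is. err (take k Is) (Is ! k))"
    by simp
  also have "\<dots> = \<E> (batches k) (\<lambda>Is. \<E> (replicate_pmf b (pmf_of_set {..<n})) (err Is))"
    by (rule expectation_replicate_pmf_take_nth[OF finite_set_sample \<open>k < T\<close>])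
  also have "\<dots> \<le> 0"
  proof -
    have "\<E> (replicate_pmf b (pmf_of_set {..<n})) (err Is) \<le> 0" for Is
      using minibatch_variance_bound
      by (simp add: err_def[abs_def] integrable_measure_pmf_finite[OF finite_set_sample])
    then have "\<E> (batches k) (\<lambda>Is. \<E> (replicate_pmf b (pmf_of_set {..<n})) (err Is)) \<le> \<E> (batches k) (\<lambda>_. 0)"
      by (intro expectation_mono_finite finite_set_batches)
    then show ?thesis by simp
  qed
  finally show ?thesis using eta_pos by (simp add: mult_nonneg_nonpos)
qed

lemma expected_lyapunov_telescope:
  "K \<le> T \<Longrightarrow> (\<eta> / 2 - L * \<eta>^2) * (\<Sum>k<K. \<E> (batches T) (\<lambda>Is. norm (grad_map n grad h \<eta> (iterate Is k)) ^ 2))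
     \<le> F_real x0 - \<E> (batches T) (\<lambda>Is. lyapunov Is K)"
proof (induction K)
  case (Suc K)
  then show ?case using expected_lyapunov_step[of K T] by (simp add: algebra_simps)
qed (simp add: lyapunov_0)

lemma expectation_proxsvrg_output:
  assumes "T \<ge> 1"
  shows "\<E> (proxsvrg_output n grad h x0 T m b \<eta>) g = (\<Sum>k<T. \<E> (batches T) (\<lambda>Is. g (iterate Is k))) / real T"
proof -
  have T: "finite {..<T}" "{..<T} \<noteq> {}" using assms by (auto simp: lessThan_empty_iff)
  have "\<E> (proxsvrg_output n grad h x0 T m b \<eta>) g
      = \<E> (batches T) (\<lambda>Is. \<E> (pmf_of_set {..<T} \<bind> (\<lambda>k. return_pmf (iterate Is k))) g)"
    unfolding proxsvrg_output_def iterate_def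
    by (rule expectation_bind_pmf_finite[OF finite_set_batches]) (use T in \<open>auto simp: set_bind_pmf\<close>)
  also have "\<dots> = \<E> (batches T) (\<lambda>Is. (\<Sum>k<T. g (iterate Is k)) / real T)"
    using T by (intro expectation_cong_set_pmf) (simp add: expectation_bind_pmf_finite integral_pmf_of_set)
  also have "\<dots> = (\<Sum>k<T. \<E> (batches T) (\<lambda>Is. g (iterate Is k))) / real T"
    by (simp add: integrable_measure_pmf_finite[OF finite_set_batches])
  finally show ?thesis .
qed

theorem proxsvrg_expected_grad_map_bound:
  assumes "T \<ge> 1" and F_min: "\<And>y. h y \<noteq> \<infinity> \<Longrightarrow> F_real x_opt \<le> F_real y"
  shows "(\<eta> / 2 - L * \<eta>^2) * \<E> (proxsvrg_output n grad h x0 T m b \<eta>) (\<lambda>x. norm (grad_map n grad h \<eta> x) ^ 2)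
           \<le> (F_real x0 - F_real x_opt) / real T"
proof -
  have "F_real x_opt \<le> lyapunov Is T" for Is
    using F_min[of "iterate Is T"] h_iterate[of Is T] F_real_le_lyapunov[of Is T] by simp
  then have "\<E> (batches T) (\<lambda>_. F_real x_opt) \<le> \<E> (batches T) (\<lambda>Is. lyapunov Is T)"
    by (intro expectation_mono_finite finite_set_batches)
  then have sum_bound: "(\<eta> / 2 - L * \<eta>^2) * (\<Sum>k<T. \<E> (batches T) (\<lambda>Is. norm (grad_map n grad h \<eta> (iterate Is k)) ^ 2))
               \<le> F_real x0 - F_real x_opt"
    using expected_lyapunov_telescope[of T T] by simp
  then show ?thesis
    using assms(1) divide_right_mono[OF sum_bound, of "real T"] by (simp add: expectation_proxsvrg_output)
qed

end

lemma proxsvrg_step_size_condition: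
  fixes L \<rho> :: real and m b :: nat
  assumes "L > 0" and "\<rho> > 0" and "b \<ge> 1" and "4 * \<rho>^2 * real m ^ 2 / real b + \<rho> \<le> 1"
  shows "L / 2 - 1 / (2 * (\<rho> / L)) + \<rho> / L * L^2 / real b * (real m - 1) * (1 + 2 * real m) \<le> 0"
proof -
  have "(real m - 1) * (1 + 2 * real m) \<le> 2 * real m ^ 2"
    by (simp add: power2_eq_square algebra_simps)
  then have "\<rho> * ((real m - 1) * (1 + 2 * real m)) / real b \<le> \<rho> * (2 * real m ^ 2) / real b"
    using assms(2,3) by (intro divide_right_mono mult_left_mono) auto
  also have "\<dots> \<le> (1 - \<rho>) / (2 * \<rho>)"
    using assms(2,4) by (simp add: field_simps power2_eq_square)
  finally have "L * (\<rho> * ((real m - 1) * (1 + 2 * real m)) / real b) \<le> L * ((1 - \<rho>) / (2 * \<rho>))"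
    using assms(1) by (intro mult_left_mono) auto
  then show ?thesis
    using assms(1,2) by (simp add: field_simps power2_eq_square)
qed

theorem theorem5:
  fixes n b m T :: nat
    and fs :: "nat \<Rightarrow> 'a::euclidean_space \<Rightarrow> real"
    and grad :: "nat \<Rightarrow> 'a \<Rightarrow> 'a"
    and h :: "'a \<Rightarrow> ereal"
    and L \<rho> \<eta> :: real
    and x0 xstar :: 'a
  assumes n_pos: "n \<ge> 1"
    and b_pos: "b \<ge> 1" and b_le: "b \<le> n"
    and m_pos: "m \<ge> 1"
    and T_pos: "T \<ge> 1" and T_mult: "m dvd T"
    and L_pos: "L > 0"
    and grad: "\<And>i x. i < n \<Longrightarrow> (fs i has_derivative (\<lambda>v. grad i x \<bullet> v)) (at x)"
    and smooth: "\<And>i x y. i < n \<Longrightarrow> norm (grad i x - grad i y) \<le> L * norm (x - y)"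
    and h_proper: "proper_ext h"
    and h_lsc: "lsc_ext h"
    and h_convex: "convex_ext h"
    and h_dom: "closed (dom_ext h)"
    and xstar_min: "\<And>x. ereal ((1 / real n) * (\<Sum>i<n. fs i xstar)) + h xstar
                         \<le> ereal ((1 / real n) * (\<Sum>i<n. fs i x)) + h x"
    and rho_pos: "0 < \<rho>" and rho_lt: "\<rho> < 1 / 2"
    and rho_cond: "4 * \<rho>^2 * real m ^ 2 / real b + \<rho> \<le> 1"
    and eta_def: "\<eta> = \<rho> / L"
  shows "ereal (measure_pmf.expectation (proxsvrg_output n grad h x0 T m b \<eta>)
                  (\<lambda>x. norm (grad_map n grad h \<eta> x) ^ 2))
         \<le> ereal (2 * L / (\<rho> * (1 - 2 * \<rho>) * real T)) *
           ((ereal ((1 / real n) * (\<Sum>i<n. fs i x0)) + h x0)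
            - (ereal ((1 / real n) * (\<Sum>i<n. fs i xstar)) + h xstar))"
proof -
  interpret proxsvrg_problem n fs grad h L \<eta>
    using n_pos L_pos rho_pos grad smooth h_proper h_lsc h_convex
    by unfold_locales (auto simp: eta_def)
  define c where "c = 2 * L / (\<rho> * (1 - 2 * \<rho>) * real T)"
  have "c > 0" using L_pos rho_pos rho_lt T_pos by (simp add: c_def)
  obtain z where "h z \<noteq> \<infinity>" using h_proper unfolding proper_ext_def by blast
  then have "h xstar \<noteq> \<infinity>" using xstar_min[of z] by auto
  then have F_xstar: "ereal (f_avg xstar) + h xstar = ereal (F_real xstar)" by (rule ereal_F_real)
  show ?thesis
  proof (cases "h x0 = \<infinity>")
    case True
    then show ?thesis using F_xstar \<open>c > 0\<close> by (simp add: f_avg_def[symmetric] flip: c_def)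
  next
    case False
    interpret proxsvrg_run n fs grad h L \<eta> m b x0
      using m_pos b_pos False proxsvrg_step_size_condition[OF L_pos rho_pos b_pos rho_cond]
      by unfold_locales (simp_all add: eta_def)
    define \<gamma> where "\<gamma> = \<eta> / 2 - L * \<eta>^2"
    have \<gamma>: "\<gamma> = 1 / (c * real T)"
      using L_pos rho_pos rho_lt T_pos by (simp add: \<gamma>_def c_def eta_def field_simps power2_eq_square)
    have "F_real xstar \<le> F_real y" if "h y \<noteq> \<infinity>" for y
      using xstar_min[of y] F_xstar ereal_F_real[OF that] by (simp add: f_avg_def)
    from proxsvrg_expected_grad_map_bound[OF T_pos this]
    have "\<E> (proxsvrg_output n grad h x0 T m b \<eta>) (\<lambda>x. norm (grad_map n grad h \<eta> x) ^ 2)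
            \<le> c * (F_real x0 - F_real xstar)"
      using \<open>c > 0\<close> T_pos by (simp add: \<gamma>_def[symmetric] \<gamma> field_simps)
    then show ?thesis
      using F_xstar ereal_F_real[OF False] unfolding f_avg_def by (simp flip: c_def)
  qed
qed

end
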